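(* Let $n\ge 0$ and let $\Lambda,V\subset\mathbb C$ be domains such that $E^n\colon\Lambda\to V$ is a conformal isomorphism. Suppose there is $\xi>1$ with $\Re z>\xi$ for all $z\in V$, that $|(E^n)'(\kappa)|>2$ for all $\kappa\in\Lambda$, and that $V$ is convex and contained in a horizontal strip of height $\pi/2$. Then $E^{n+1}\colon\Lambda\to E^{n+1}(\Lambda)$ is a conformal isomorphism with \[|(E^{n+1})'(\kappa)|>e^\xi|(E^n)'(\kappa)|-1>2|(E^n)'(\kappa)|\] for all $\kappa\in\Lambda$, and $E^{n,n+1}\colon V\to E^{n+1}(\Lambda)$ is a conformal isomorphism with $|(E^{n,n+1})'(z)|>e^\xi-1$ for all $z\in V$.
   Context: For $\kappa\in\mathbb C$ let $E_\kappa(z)=e^z+\kappa$ and $E^n(\kappa):=E_\kappa^{\circ n}(\kappa)$, an entire function of $\kappa$; $(E^n)'$ denotes its derivative with respect to $\kappa$. If $E^n\colon\Lambda\to V$ is a conformal isomorphism, then for $k\ge0$ one defines the holomorphic map $E^{n,n+k}:=E^{n+k}\circ(E^n)^{-1}\colon V\to\mathbb C$; in particular $E^{n,n+1}(z)=e^z+\kappa$ where $\kappa=(E^n)^{-1}(z)$. *)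

theory Defs
  imports "HOL-Analysis.Analysis"
begin

definition Ek :: "complex \<Rightarrow> complex \<Rightarrow> complex" where
  "Ek \<kappa> z = exp z + \<kappa>"

definition En :: "nat \<Rightarrow> complex \<Rightarrow> complex" where
  "En n \<kappa> = (Ek \<kappa> ^^ n) \<kappa>"

definition conformal_iso :: "(complex \<Rightarrow> complex) \<Rightarrow> complex set \<Rightarrow> complex set \<Rightarrow> bool" where
  "conformal_iso f A B \<longleftrightarrow> f holomorphic_on A \<and> inj_on f A \<and> f ` A = B"

definition domain :: "complex set \<Rightarrow> bool" where
  "domain S \<longleftrightarrow> open S \<and> connected S \<and> S \<noteq> {}"

definition Enk :: "complex set \<Rightarrow> nat \<Rightarrow> nat \<Rightarrow> complex \<Rightarrow> complex" where
  "Enk \<Lambda> n k z = En (n + k) (inv_into \<Lambda> (En n) z)"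

end

theory Submission
  imports Defs "HOL-Complex_Analysis.Conformal_Mappings"
begin

(* Write \<phi> = (E^n)^{-1} : V \<rightarrow> \<Lambda>.  Since E^{n+1}(\<kappa>) = exp (E^n \<kappa>) + \<kappa>,
   the map E^{n,n+1} on V is  \<psi>(z) = exp z + \<phi>(z),  with derivative
   \<psi>'(z) = exp z + 1/(E^n)'(\<phi> z), and the second summand has modulus < 1/2.
   Because V lies in a horizontal strip of height \<pi>/2 and in the right half plane,
   a fixed rotation \<omega> = exp(-i(a + \<pi>/4)) puts \<omega> exp z into the sector |arg| < \<pi>/4
   with Re(\<omega> exp z) > 1/2; hence Re(\<omega> \<psi>') > 0 on V.  On a convex set this forces
   injectivity (a Noshiro-Warschawski type argument via the mean value theorem).  The theorem follows by composing
   E^{n+1} = E^{n,n+1} \<circ> E^n on \<Lambda> and by elementary derivative estimates. *)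

lemma En_Suc: "En (Suc n) \<kappa> = exp (En n \<kappa>) + \<kappa>"
  by (simp add: En_def Ek_def)

lemma En_holomorphic: "En n holomorphic_on UNIV"
proof (induction n)
  case 0
  have "En 0 = (\<lambda>\<kappa>. \<kappa>)" by (simp add: En_def fun_eq_iff)
  then show ?case by simp
next
  case (Suc n)
  have "En (Suc n) = (\<lambda>\<kappa>. exp (En n \<kappa>) + \<kappa>)" by (simp add: En_Suc fun_eq_iff)
  then show ?case
    by (simp add: holomorphic_intros holomorphic_on_compose[unfolded o_def, OF Suc])
qed

lemma En_has_field_derivative: "(En n has_field_derivative deriv (En n) \<kappa>) (at \<kappa>)"
  using holomorphic_derivI[OF En_holomorphic open_UNIV UNIV_I] .

lemma deriv_En_Suc: "deriv (En (Suc n)) \<kappa> = exp (En n \<kappa>) * deriv (En n) \<kappa> + 1"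
proof (rule DERIV_imp_deriv)
  have "En (Suc n) = (\<lambda>\<kappa>. exp (En n \<kappa>) + \<kappa>)" by (simp add: En_Suc fun_eq_iff)
  then show "(En (Suc n) has_field_derivative exp (En n \<kappa>) * deriv (En n) \<kappa> + 1) (at \<kappa>)"
    using DERIV_add[OF DERIV_chain2[OF DERIV_exp En_has_field_derivative] DERIV_ident] by simp
qed

lemma inv_into_has_field_derivative:
  fixes f :: "complex \<Rightarrow> complex"
  assumes hol: "f holomorphic_on S" and "open S" and inj: "inj_on f S" and y: "y \<in> f ` S"
  shows "(inv_into S f has_field_derivative inverse (deriv f (inv_into S f y))) (at y)"
proof -
  let ?x = "inv_into S f y"
  have x: "?x \<in> S" and fx: "f ?x = y" using y by (auto simp: inv_into_into f_inv_into_f)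
  show ?thesis
  proof (rule has_field_derivative_inverse_strong_x[where S = S and f = f and g = "inv_into S f"])
    show "(f has_field_derivative deriv f ?x) (at ?x)"
      using holomorphic_derivI[OF hol \<open>open S\<close> x] .
    show "deriv f ?x \<noteq> 0"
      using holomorphic_injective_imp_regular[OF hol \<open>open S\<close> inj x] .
    show "continuous_on S f" using hol by (rule holomorphic_on_imp_continuous_on)
    show "\<And>z. z \<in> S \<Longrightarrow> inv_into S f (f z) = z" using inj by simp
  qed (use \<open>open S\<close> x fx in auto)
qed

lemma Enk_one_eq:
  assumes "y \<in> En n ` \<Lambda>"
  shows "Enk \<Lambda> n 1 y = exp y + inv_into \<Lambda> (En n) y"
  using assms by (simp add: Enk_def En_Suc f_inv_into_f)

lemma En_Suc_eq_Enk_one: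
  assumes "inj_on (En n) \<Lambda>" and "\<kappa> \<in> \<Lambda>"
  shows "En (Suc n) \<kappa> = Enk \<Lambda> n 1 (En n \<kappa>)"
  using assms by (simp add: Enk_def)

lemma Enk_one_image:
  assumes "inj_on (En n) \<Lambda>"
  shows "Enk \<Lambda> n 1 ` (En n ` \<Lambda>) = En (Suc n) ` \<Lambda>"
  using En_Suc_eq_Enk_one[OF assms] by (simp add: image_image)

lemma Enk_one_has_field_derivative:
  assumes "open \<Lambda>" and inj: "inj_on (En n) \<Lambda>" and "open (En n ` \<Lambda>)"
    and y: "y \<in> En n ` \<Lambda>"
  shows "(Enk \<Lambda> n 1 has_field_derivative
           exp y + inverse (deriv (En n) (inv_into \<Lambda> (En n) y))) (at y)"
proof (rule has_field_derivative_transform_within_open[OF _ \<open>open (En n ` \<Lambda>)\<close> y])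
  have hol: "En n holomorphic_on \<Lambda>" using En_holomorphic by (rule holomorphic_on_subset) simp
  show "((\<lambda>y. exp y + inv_into \<Lambda> (En n) y) has_field_derivative
          exp y + inverse (deriv (En n) (inv_into \<Lambda> (En n) y))) (at y)"
    by (rule DERIV_add[OF DERIV_exp inv_into_has_field_derivative[OF hol \<open>open \<Lambda>\<close> inj y]])
  show "\<And>z. z \<in> En n ` \<Lambda> \<Longrightarrow> exp z + inv_into \<Lambda> (En n) z = Enk \<Lambda> n 1 z"
    by (rule Enk_one_eq[symmetric])
qed

lemma inj_on_if_Re_rotated_deriv_pos:
  fixes g :: "complex \<Rightarrow> complex"
  assumes "convex S"
    and der: "\<And>u. u \<in> S \<Longrightarrow> (g has_field_derivative g' u) (at u)"
    and pos: "\<And>u. u \<in> S \<Longrightarrow> Re (\<omega> * g' u) > 0"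
  shows "inj_on g S"
proof (rule inj_onI, rule ccontr)
  fix z w assume z: "z \<in> S" and w: "w \<in> S" and eq: "g z = g w" and ne: "z \<noteq> w"
  define h where "h u = \<omega> * g u / (z - w)" for u
  have seg: "closed_segment w z \<subseteq> S" using \<open>convex S\<close> z w by (simp add: closed_segment_subset)
  have "\<exists>u. u \<in> closed_segment w z \<and> Re (h z) - Re (h w) = Re ((\<omega> * g' u / (z - w)) * (z - w))"
    by (rule complex_mvt_line)
       (unfold h_def, use seg der ne in \<open>auto intro!: derivative_eq_intros\<close>)
  then obtain u where u: "u \<in> S" and "Re (h z) - Re (h w) = Re (\<omega> * g' u)"
    using seg ne by auto
  moreover have "h z = h w" using eq by (simp add: h_def)
  ultimately show False using pos[OF u] by simp
qed

lemma cos_gt_half: assumes "\<bar>t\<bar> < pi/4" shows "cos t > 1/2"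
proof -
  have "cos \<bar>t\<bar> > cos (pi/3)"
    by (rule cos_monotone_0_pi) (use assms pi_gt_zero in auto)
  then show ?thesis by (simp add: cos_60 cos_abs_real)
qed

(* Sector estimate: rotating by exp(-i(a + \<pi>/4)) sends exp of the strip
   a < Im u < a + \<pi>/2 into the sector |arg| < \<pi>/4. *)
lemma Re_rotated_exp_gt:
  assumes "a < Im u" and "Im u < a + pi/2"
  shows "Re (exp (- (\<i> * of_real (a + pi/4))) * exp u) > exp (Re u) / 2"
proof -
  have "exp (- (\<i> * of_real (a + pi/4))) * exp u = exp (u - \<i> * of_real (a + pi/4))"
    by (simp add: exp_add[symmetric])
  then have "Re (exp (- (\<i> * of_real (a + pi/4))) * exp u) = exp (Re u) * cos (Im u - (a + pi/4))"
    by (simp add: Re_exp)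
  moreover have "cos (Im u - (a + pi/4)) > 1/2"
  proof (rule cos_gt_half)
    show "\<bar>Im u - (a + pi/4)\<bar> < pi/4" unfolding abs_less_iff using assms by linarith
  qed
  ultimately show ?thesis by simp
qed

lemma norm_inverse_lt_half:
  assumes "norm (x :: complex) > 2" shows "norm (inverse x) < 1/2"
proof -
  have "inverse (norm x) < inverse 2" using assms by (intro less_imp_inverse_less) auto
  then show ?thesis by (simp add: norm_inverse)
qed

(* E^{n,n+1} is injective on V: its rotated derivative exp z + 1/(E^n)' has
   positive real part, since the rotated exp term exceeds 1/2 and the other is < 1/2. *)
lemma Enk_one_inj:
  assumes "open \<Lambda>" and iso: "conformal_iso (En n) \<Lambda> V" and "open V" and "convex V"
    and strip: "\<forall>z\<in>V. a < Im z \<and> Im z < a + pi / 2"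
    and right: "\<forall>z\<in>V. Re z > 0"
    and big: "\<forall>\<kappa>\<in>\<Lambda>. norm (deriv (En n) \<kappa>) > 2"
  shows "inj_on (Enk \<Lambda> n 1) V"
proof -
  have inj: "inj_on (En n) \<Lambda>" and img: "En n ` \<Lambda> = V"
    using iso by (auto simp: conformal_iso_def)
  define \<omega> where "\<omega> = exp (- (\<i> * of_real (a + pi/4)))"
  define w where "w y = inverse (deriv (En n) (inv_into \<Lambda> (En n) y))" for y
  show ?thesis
  proof (rule inj_on_if_Re_rotated_deriv_pos[OF \<open>convex V\<close>])
    show "(Enk \<Lambda> n 1 has_field_derivative exp y + w y) (at y)" if "y \<in> V" for y
      unfolding w_def using Enk_one_has_field_derivative[OF \<open>open \<Lambda>\<close> inj] that img \<open>open V\<close> by simp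
    show "Re (\<omega> * (exp y + w y)) > 0" if y: "y \<in> V" for y
    proof -
      have "Re (\<omega> * exp y) > exp (Re y) / 2"
        unfolding \<omega>_def using Re_rotated_exp_gt strip y by blast
      moreover have "exp (Re y) / 2 > 1/2" using right y by simp
      moreover have "norm (w y) < 1/2"
        unfolding w_def using big y img by (metis norm_inverse_lt_half inv_into_into)
      then have "\<bar>Re (\<omega> * w y)\<bar> < 1/2"
        using abs_Re_le_cmod[of "\<omega> * w y"] by (simp add: norm_mult \<omega>_def norm_exp)
      moreover have "Re (\<omega> * (exp y + w y)) = Re (\<omega> * exp y) + Re (\<omega> * w y)"
        by (simp only: distrib_left plus_complex.sel)
      ultimately show ?thesis by linarith
    qed
  qed
qed

lemma deriv_Enk_one_gt:
  assumes "open \<Lambda>" and iso: "conformal_iso (En n) \<Lambda> V" and "open V" and y: "y \<in> V"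
    and big: "\<forall>\<kappa>\<in>\<Lambda>. norm (deriv (En n) \<kappa>) > 2"
  shows "norm (deriv (Enk \<Lambda> n 1) y) > exp (Re y) - 1/2"
proof -
  have inj: "inj_on (En n) \<Lambda>" and img: "En n ` \<Lambda> = V"
    using iso by (auto simp: conformal_iso_def)
  let ?w = "inverse (deriv (En n) (inv_into \<Lambda> (En n) y))"
  have "deriv (Enk \<Lambda> n 1) y = exp y + ?w"
    using Enk_one_has_field_derivative[OF \<open>open \<Lambda>\<close> inj] img \<open>open V\<close> y by (simp add: DERIV_imp_deriv)
  moreover have "norm (exp y + ?w) \<ge> norm (exp y) - norm ?w"
    using norm_diff_ineq by blast
  moreover have "norm ?w < 1/2" using big y img by (metis norm_inverse_lt_half inv_into_into)
  ultimately show ?thesis by (simp add: norm_exp)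
qed

lemma deriv_En_Suc_ge:
  "norm (deriv (En (Suc n)) \<kappa>) \<ge> exp (Re (En n \<kappa>)) * norm (deriv (En n) \<kappa>) - 1"
proof -
  have "norm (exp (En n \<kappa>) * deriv (En n) \<kappa> + 1) \<ge> norm (exp (En n \<kappa>) * deriv (En n) \<kappa>) - norm (1::complex)"
    by (rule norm_diff_ineq)
  then show ?thesis by (simp add: deriv_En_Suc norm_mult norm_exp)
qed

lemma exp_gt_five_halves: assumes "\<xi> > (1 :: real)" shows "exp \<xi> > 5/2"
proof -
  have "1 + \<xi> + \<xi>^2/2 \<le> exp \<xi>" using assms by (intro exp_lower_Taylor_quadratic) auto
  moreover have "\<xi>^2 > 1" using assms by (simp add: one_less_power)
  ultimately show ?thesis using assms by linarith
qed

lemma deriv_En_Suc_gt: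
  assumes "\<xi> > 1" and re: "Re (En n \<kappa>) > \<xi>" and big: "norm (deriv (En n) \<kappa>) > 2"
  shows "norm (deriv (En (Suc n)) \<kappa>) > exp \<xi> * norm (deriv (En n) \<kappa>) - 1
       \<and> exp \<xi> * norm (deriv (En n) \<kappa>) - 1 > 2 * norm (deriv (En n) \<kappa>)"
proof
  have "exp (Re (En n \<kappa>)) * norm (deriv (En n) \<kappa>) > exp \<xi> * norm (deriv (En n) \<kappa>)"
    using re big by (intro mult_strict_right_mono) auto
  then show "norm (deriv (En (Suc n)) \<kappa>) > exp \<xi> * norm (deriv (En n) \<kappa>) - 1"
    using deriv_En_Suc_ge[of n \<kappa>] by linarith
  have "(exp \<xi> - 2) * norm (deriv (En n) \<kappa>) > (1/2) * 2"
    using exp_gt_five_halves[OF \<open>\<xi> > 1\<close>] big by (intro mult_strict_mono) auto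
  then show "exp \<xi> * norm (deriv (En n) \<kappa>) - 1 > 2 * norm (deriv (En n) \<kappa>)"
    by (simp add: algebra_simps)
qed

theorem lemma2p1:
  fixes n :: nat and \<Lambda> V :: "complex set" and \<xi> :: real
  assumes "domain \<Lambda>" and "domain V"
    and "conformal_iso (En n) \<Lambda> V"
    and "\<xi> > 1" and "\<forall>z\<in>V. Re z > \<xi>"
    and "\<forall>\<kappa>\<in>\<Lambda>. norm (deriv (En n) \<kappa>) > 2"
    and "convex V"
    and "\<exists>a::real. \<forall>z\<in>V. a < Im z \<and> Im z < a + pi / 2"
  shows "conformal_iso (En (Suc n)) \<Lambda> (En (Suc n) ` \<Lambda>)
    \<and> (\<forall>\<kappa>\<in>\<Lambda>. norm (deriv (En (Suc n)) \<kappa>) > exp \<xi> * norm (deriv (En n) \<kappa>) - 1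
                \<and> exp \<xi> * norm (deriv (En n) \<kappa>) - 1 > 2 * norm (deriv (En n) \<kappa>))
    \<and> conformal_iso (Enk \<Lambda> n 1) V (En (Suc n) ` \<Lambda>)
    \<and> (\<forall>z\<in>V. norm (deriv (Enk \<Lambda> n 1) z) > exp \<xi> - 1)"
proof -
  obtain a :: real where strip: "\<forall>z\<in>V. a < Im z \<and> Im z < a + pi / 2" using assms(8) by blast
  have oL: "open \<Lambda>" and oV: "open V" using assms(1,2) by (auto simp: domain_def)
  have inj: "inj_on (En n) \<Lambda>" and img: "En n ` \<Lambda> = V"
    using assms(3) by (auto simp: conformal_iso_def)
  have right: "\<forall>z\<in>V. Re z > 0" using assms(4,5) by force
  have injK: "inj_on (Enk \<Lambda> n 1) V"
    using Enk_one_inj[OF oL assms(3) oV assms(7) strip right assms(6)] .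
  have holK: "Enk \<Lambda> n 1 holomorphic_on V"
    using Enk_one_has_field_derivative[OF oL inj] img oV by (auto simp: holomorphic_on_open)
  have injE: "inj_on (En (Suc n)) \<Lambda>"
    using comp_inj_on[OF inj, of "Enk \<Lambda> n 1"] injK img
    by (simp add: inj_on_cong[OF En_Suc_eq_Enk_one[OF inj]] o_def)
  have holE: "En (Suc n) holomorphic_on \<Lambda>" using En_holomorphic by (rule holomorphic_on_subset) simp
  have derE: "\<forall>\<kappa>\<in>\<Lambda>. norm (deriv (En (Suc n)) \<kappa>) > exp \<xi> * norm (deriv (En n) \<kappa>) - 1
                \<and> exp \<xi> * norm (deriv (En n) \<kappa>) - 1 > 2 * norm (deriv (En n) \<kappa>)"
    using deriv_En_Suc_gt[OF assms(4)] assms(5,6) img by blast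
  have derK: "\<forall>z\<in>V. norm (deriv (Enk \<Lambda> n 1) z) > exp \<xi> - 1"
  proof
    fix z assume z: "z \<in> V"
    have "exp \<xi> < exp (Re z)" using assms(5) z by simp
    then show "norm (deriv (Enk \<Lambda> n 1) z) > exp \<xi> - 1"
      using deriv_Enk_one_gt[OF oL assms(3) oV z assms(6)] by linarith
  qed
  have "Enk \<Lambda> n 1 ` V = En (Suc n) ` \<Lambda>" using Enk_one_image[OF inj] img by simp
  then show ?thesis using injE holE injK holK derE derK by (simp add: conformal_iso_def)
qed

end
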